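(* Let $n\ge 3$. For every integer $m\ge 3$, the map $d'_m:\mathcal{C}_n\times\mathcal{C}_n\to\mathbb{R}$ is a metric on $\mathcal{C}_n$ (in particular, the quotient defining it is finite).
   Context: For $n\ge1$ let $[n]=\{1,\dots,n\}$. A contact structure of length $n$ is a simple undirected graph $\Gamma=([n],Q)$ (no self-loops, no multiple edges) such that $\{i,i+1\}\notin Q$ for every $i$; its edges are called contacts, written $i\cdot j$. $\mathcal{C}_n$ is the set of all contact structures of length $n$. $\mathbb{F}_2=\mathbb{Z}/2\mathbb{Z}$. The edge ideal $I_\Gamma$ of $\Gamma=([n],Q)$ is the ideal of $\mathbb{F}_2[x_1,\dots,x_n]$ generated by $\{x_ix_j:i\cdot j\in Q\}$. For $m\ge3$ let $R_{n,m}=\mathbb{F}_2[x_1,\dots,x_n]/\langle \text{all monomials of total degree } m\rangle$ and $\pi_m$ the quotient map; for an ideal $I$, $\pi_m(I)$ is its image, an additive subgroup of $R_{n,m}$. Define $d'_m(\Gamma_1,\Gamma_2)=\log_2\Bigl|\dfrac{\pi_m(I_{\Gamma_1})+\pi_m(I_{\Gamma_2})}{\pi_m(I_{\Gamma_1})\cap\pi_m(I_{\Gamma_2})}\Bigr|$, the base-2 logarithm of the cardinality of the quotient of additive groups. *)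

theory Defs
  imports Complex_Main "HOL-Library.Poly_Mapping" "HOL-Library.Z2"
begin

text \<open>Polynomials over F2 = bit in variables indexed by nat: maps from exponent
  vectors (monomials) to coefficients, with convolution product.\<close>
type_synonym mpoly = "(nat \<Rightarrow>\<^sub>0 nat) \<Rightarrow>\<^sub>0 bit"

text \<open>The polynomial ring F2[x_1,...,x_n] as a subset (subring) of mpoly.\<close>
definition Pn :: "nat \<Rightarrow> mpoly set" where
  "Pn n = {p. \<forall>a\<in>Poly_Mapping.keys p. Poly_Mapping.keys a \<subseteq> {1..n}}"

definition Xv :: "nat \<Rightarrow> mpoly" where
  "Xv i = Poly_Mapping.single (Poly_Mapping.single i 1) 1"

definition monom :: "(nat \<Rightarrow>\<^sub>0 nat) \<Rightarrow> mpoly" where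
  "monom a = Poly_Mapping.single a 1"

definition contact_structures :: "nat \<Rightarrow> nat set set set" where
  "contact_structures n = {Q. (\<forall>e\<in>Q. \<exists>i j. e = {i, j} \<and> i \<noteq> j \<and> i \<in> {1..n} \<and> j \<in> {1..n})
      \<and> (\<forall>i. {i, i + 1} \<notin> Q)}"

text \<open>Edge ideal: ideal of F2[x_1..x_n] generated by x_i x_j for contacts {i,j}
  (Q is finite, so the ideal consists of the P_n-linear combinations of the generators).\<close>
definition edge_ideal :: "nat \<Rightarrow> nat set set \<Rightarrow> mpoly set" where
  "edge_ideal n Q = {\<Sum>e\<in>Q. c e * (\<Prod>i\<in>e. Xv i) | c. \<forall>e. c e \<in> Pn n}"

definition monos_deg :: "nat \<Rightarrow> nat \<Rightarrow> (nat \<Rightarrow>\<^sub>0 nat) set" where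
  "monos_deg n m = {a. Poly_Mapping.keys a \<subseteq> {1..n} \<and> (\<Sum>i\<in>{1..n}. Poly_Mapping.lookup a i) = m}"

definition deg_ideal :: "nat \<Rightarrow> nat \<Rightarrow> mpoly set" where
  "deg_ideal n m = {\<Sum>a\<in>monos_deg n m. c a * monom a | c. \<forall>a. c a \<in> Pn n}"

text \<open>Elements of R_{n,m} are cosets p + J; pi_m is the quotient map.\<close>
definition pi_m :: "nat \<Rightarrow> nat \<Rightarrow> mpoly \<Rightarrow> mpoly set" where
  "pi_m n m p = (\<lambda>q. p + q) ` deg_ideal n m"

definition pi_img :: "nat \<Rightarrow> nat \<Rightarrow> mpoly set \<Rightarrow> mpoly set set" where
  "pi_img n m I = pi_m n m ` I"

definition radd :: "mpoly set \<Rightarrow> mpoly set \<Rightarrow> mpoly set" where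
  "radd a b = {x + y | x y. x \<in> a \<and> y \<in> b}"

definition subgroup_sum :: "mpoly set set \<Rightarrow> mpoly set set \<Rightarrow> mpoly set set" where
  "subgroup_sum A B = {radd a b | a b. a \<in> A \<and> b \<in> B}"

definition quot_group :: "mpoly set set \<Rightarrow> mpoly set set \<Rightarrow> mpoly set set set" where
  "quot_group G H = {(\<lambda>h. radd g h) ` H | g. g \<in> G}"

definition dquot :: "nat \<Rightarrow> nat \<Rightarrow> nat set set \<Rightarrow> nat set set \<Rightarrow> mpoly set set set" where
  "dquot n m Q1 Q2 =
     quot_group (subgroup_sum (pi_img n m (edge_ideal n Q1)) (pi_img n m (edge_ideal n Q2)))
                (pi_img n m (edge_ideal n Q1) \<inter> pi_img n m (edge_ideal n Q2))"

definition dprime :: "nat \<Rightarrow> nat \<Rightarrow> nat set set \<Rightarrow> nat set set \<Rightarrow> real" where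
  "dprime n m Q1 Q2 = log 2 (real (card (dquot n m Q1 Q2)))"

end

(* Let J be the ideal generated by the monomials of degree m, so that R_{n,m} = F_2[x_1..x_n] / J,
   and let A_Q be the image in R_{n,m} of the edge ideal of Q.  The group R_{n,m} is finite, as
   every polynomial is congruent modulo J to its part of degree below m, and by Lagrange and the
   second isomorphism theorem |(A + B) / (A \<inter> B)| = |A| |B| / |A \<inter> B|^2 for subgroups A, B.
   On finite subgroups of an abelian group the logarithm of this index is a metric: it vanishes
   only for A = B, and the triangle inequality reduces to |A \<inter> B| |B \<inter> C| \<le> |B| |A \<inter> C|,
   the product formula for the subgroups A \<inter> B and B \<inter> C of B.
   Finally Q \<mapsto> A_Q is injective: every monomial occurring in an element of I_Q + J is divisible
   by x_i x_j for a contact i\<cdot>j of Q or has degree at least m \<ge> 3, so x_i x_j \<in> I_Q + J only if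
   i\<cdot>j is a contact of Q. *)

theory Submission
  imports Defs "HOL-Algebra.SndIsomorphismGrp"
begin

definition join_meet_index :: "('a, 'b) monoid_scheme \<Rightarrow> 'a set \<Rightarrow> 'a set \<Rightarrow> nat" where
  "join_meet_index G X Y = card (rcosets\<^bsub>G\<lparr>carrier := X <#>\<^bsub>G\<^esub> Y\<rparr>\<^esub> (X \<inter> Y))"

context comm_group
begin

lemma subgroup_subset_set_mult:
  assumes "subgroup X G" and "subgroup Y G"
  shows "X \<subseteq> X <#> Y"
proof
  fix x assume "x \<in> X"
  then have "x \<otimes> \<one> \<in> X <#> Y"
    using subgroup.one_closed[OF assms(2)] by (auto simp: set_mult_def)
  then show "x \<in> X <#> Y"
    using \<open>x \<in> X\<close> subgroup.subset[OF assms(1)] by auto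
qed

lemma card_set_mult_mult_card_Int:
  assumes X: "subgroup X G" and Y: "subgroup Y G"
  shows "card (X <#> Y) * card (X \<inter> Y) = card X * card Y"
proof -
  interpret second_isomorphism_grp X G Y
    using X Y by (simp add: second_isomorphism_grp_def second_isomorphism_grp_axioms_def
        normal_iff_subgroup)
  have XY: "subgroup (X <#> Y) G" using mult_subgroups[OF X Y] .
  have "X \<subseteq> X <#> Y" using subgroup_subset_set_mult[OF X Y] .
  have "card (rcosets\<^bsub>G\<lparr>carrier := Y\<rparr>\<^esub> (X \<inter> Y)) = card (rcosets\<^bsub>G\<lparr>carrier := X <#> Y\<rparr>\<^esub> X)"
    using iso_same_card[OF is_isoI[OF normal_intersection_quotient_isom]]
    by (simp add: FactGroup_def)
  moreover have "card (rcosets\<^bsub>G\<lparr>carrier := Y\<rparr>\<^esub> (X \<inter> Y)) * card (X \<inter> Y) = card Y"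
    using group.lagrange[OF subgroup_imp_group[OF Y] subgroup_incl[OF subgroups_Inter_pair[OF X Y] Y]]
    by (simp add: order_def)
  moreover have "card (rcosets\<^bsub>G\<lparr>carrier := X <#> Y\<rparr>\<^esub> X) * card X = card (X <#> Y)"
    using group.lagrange[OF subgroup_imp_group[OF XY] subgroup_incl[OF X XY \<open>X \<subseteq> X <#> Y\<close>]]
    by (simp add: order_def)
  ultimately show ?thesis by (metis mult.assoc mult.commute)
qed

lemma join_meet_index_mult_card_Int:
  assumes X: "subgroup X G" and Y: "subgroup Y G"
  shows "join_meet_index G X Y * card (X \<inter> Y) = card (X <#> Y)"
proof -
  have XY: "subgroup (X <#> Y) G" using mult_subgroups[OF X Y] .
  have "X \<inter> Y \<subseteq> X <#> Y"
    using subgroup_subset_set_mult[OF X Y] by blast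
  then show ?thesis
    using group.lagrange[OF subgroup_imp_group[OF XY] subgroup_incl[OF subgroups_Inter_pair[OF X Y] XY]]
    by (simp add: join_meet_index_def order_def)
qed

lemma join_meet_index_mult_square_card_Int:
  assumes X: "subgroup X G" and Y: "subgroup Y G"
  shows "join_meet_index G X Y * card (X \<inter> Y) ^ 2 = card X * card Y"
  using join_meet_index_mult_card_Int[OF X Y] card_set_mult_mult_card_Int[OF X Y]
  by (metis mult.assoc power2_eq_square)

lemma card_subgroup_pos: "subgroup H G \<Longrightarrow> finite H \<Longrightarrow> 0 < card H"
  using subgroup.one_closed card_gt_0_iff by blast

lemma join_meet_index_pos:
  assumes X: "subgroup X G" and Y: "subgroup Y G" and "finite X" "finite Y"
  shows "0 < join_meet_index G X Y"
  using join_meet_index_mult_square_card_Int[OF X Y] card_subgroup_pos[OF X] card_subgroup_pos[OF Y] assms(3,4)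
  by (metis mult_is_0 neq0_conv)

lemma join_meet_index_commute:
  assumes X: "subgroup X G" and Y: "subgroup Y G" and "finite X"
  shows "join_meet_index G X Y = join_meet_index G Y X"
proof -
  have "join_meet_index G X Y * card (X \<inter> Y) ^ 2 = join_meet_index G Y X * card (X \<inter> Y) ^ 2"
    using join_meet_index_mult_square_card_Int[OF X Y] join_meet_index_mult_square_card_Int[OF Y X]
    by (simp add: Int_commute mult.commute)
  moreover have "0 < card (X \<inter> Y)"
    using card_subgroup_pos[OF subgroups_Inter_pair[OF X Y]] \<open>finite X\<close> by blast
  ultimately show ?thesis by simp
qed

lemma join_meet_index_eq_1_iff:
  assumes X: "subgroup X G" and Y: "subgroup Y G" and "finite X" "finite Y"
  shows "join_meet_index G X Y = 1 \<longleftrightarrow> X = Y"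
proof
  assume "join_meet_index G X Y = 1"
  then have eq: "card (X \<inter> Y) * card (X \<inter> Y) = card X * card Y"
    using join_meet_index_mult_square_card_Int[OF X Y] by (simp add: power2_eq_square)
  have c_pos: "0 < card (X \<inter> Y)"
    using card_subgroup_pos[OF subgroups_Inter_pair[OF X Y]] \<open>finite X\<close> by blast
  have "card (X \<inter> Y) * card (X \<inter> Y) \<le> card (X \<inter> Y) * card Y"
    and "card (X \<inter> Y) * card Y \<le> card X * card Y"
    using assms(3,4) by (simp_all add: card_mono)
  then have "card (X \<inter> Y) * card Y = card X * card Y"
    and "card (X \<inter> Y) * card (X \<inter> Y) = card (X \<inter> Y) * card Y"
    using eq by linarith+
  then have "card (X \<inter> Y) = card X \<and> card (X \<inter> Y) = card Y"
    using c_pos by (metis mult_cancel1 mult_cancel2 neq0_conv)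
  then show "X = Y"
    using assms(3,4) by (metis Int_lower1 Int_lower2 card_subset_eq)
next
  assume "X = Y"
  then show "join_meet_index G X Y = 1"
    using join_meet_index_mult_square_card_Int[OF X X] card_subgroup_pos[OF X] assms(3)
    by (auto simp: power2_eq_square)
qed

lemma card_Int_mult_card_Int_le:
  assumes X: "subgroup X G" and Y: "subgroup Y G" and Z: "subgroup Z G" and "finite X" "finite Y"
  shows "card (X \<inter> Y) * card (Y \<inter> Z) \<le> card Y * card (X \<inter> Z)"
proof -
  have XY: "subgroup (X \<inter> Y) G" and YZ: "subgroup (Y \<inter> Z) G"
    using X Y Z by (simp_all add: subgroups_Inter_pair)
  have "(X \<inter> Y) <#> (Y \<inter> Z) \<subseteq> Y"
    using subgroup.m_closed[OF Y] by (auto simp: set_mult_def)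
  then have "card ((X \<inter> Y) <#> (Y \<inter> Z)) \<le> card Y"
    using \<open>finite Y\<close> by (rule card_mono[rotated])
  moreover have "card (X \<inter> Y \<inter> (Y \<inter> Z)) \<le> card (X \<inter> Z)"
    using \<open>finite X\<close> by (intro card_mono) auto
  ultimately show ?thesis
    using card_set_mult_mult_card_Int[OF XY YZ] by (metis mult_le_mono)
qed

lemma join_meet_index_triangle:
  assumes X: "subgroup X G" and Y: "subgroup Y G" and Z: "subgroup Z G"
    and "finite X" "finite Y"
  shows "join_meet_index G X Z \<le> join_meet_index G X Y * join_meet_index G Y Z"
proof -
  define p q r where "p = card (X \<inter> Y)" and "q = card (Y \<inter> Z)" and "r = card (X \<inter> Z)"
  have pos: "0 < p * q * r"
    using card_subgroup_pos subgroups_Inter_pair X Y Z assms(4,5) unfolding p_def q_def r_def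
    by (metis finite_Int mult_pos_pos)
  have "join_meet_index G X Z * (p * q * r) ^ 2 = card X * card Z * (p * q) ^ 2"
    using join_meet_index_mult_square_card_Int[OF X Z] by (simp add: r_def power_mult_distrib ac_simps)
  also have "\<dots> \<le> card X * card Z * (card Y * r) ^ 2"
    using card_Int_mult_card_Int_le[OF X Y Z assms(4,5)] unfolding p_def q_def r_def
    by (intro mult_le_mono2 power_mono) auto
  also have "\<dots> = (card X * card Y) * (card Y * card Z) * r ^ 2"
    by (simp add: power2_eq_square ac_simps)
  also have "\<dots> = join_meet_index G X Y * join_meet_index G Y Z * (p * q * r) ^ 2"
    using join_meet_index_mult_square_card_Int[OF X Y] join_meet_index_mult_square_card_Int[OF Y Z]
    unfolding p_def q_def by (simp add: power_mult_distrib ac_simps)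
  finally show ?thesis using pos by simp
qed

lemma finite_join_meet_rcosets:
  assumes "finite X" and "finite Y"
  shows "finite (rcosets\<^bsub>G\<lparr>carrier := X <#> Y\<rparr>\<^esub> (X \<inter> Y))"
  using assms by (simp add: RCOSETS_def set_mult_def)

lemma log_join_meet_index_eq_0_iff:
  assumes X: "subgroup X G" and Y: "subgroup Y G" and "finite X" "finite Y"
  shows "log 2 (join_meet_index G X Y) = 0 \<longleftrightarrow> X = Y"
  using join_meet_index_pos[OF assms] join_meet_index_eq_1_iff[OF assms] by (simp add: log_def)

lemma log_join_meet_index_triangle:
  assumes X: "subgroup X G" and Y: "subgroup Y G" and Z: "subgroup Z G"
    and "finite X" "finite Y" "finite Z"
  shows "log 2 (join_meet_index G X Z) \<le> log 2 (join_meet_index G X Y) + log 2 (join_meet_index G Y Z)"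
proof -
  have "real (join_meet_index G X Z) \<le> real (join_meet_index G X Y) * real (join_meet_index G Y Z)"
    using join_meet_index_triangle[OF X Y Z assms(4,5)] by (simp flip: of_nat_mult)
  then show ?thesis
    using join_meet_index_pos X Y Z assms(4-6) by (simp flip: log_mult_pos)
qed

end

definition additive_group :: "'a::ab_group_add monoid" where
  "additive_group = \<lparr>carrier = UNIV, mult = (+), one = 0\<rparr>"

lemma additive_group_simps [simp]:
  "carrier additive_group = UNIV"
  "x \<otimes>\<^bsub>additive_group\<^esub> y = x + y"
  "\<one>\<^bsub>additive_group\<^esub> = 0"
  by (simp_all add: additive_group_def)

lemma comm_group_additive_group: "comm_group (additive_group :: 'a::ab_group_add monoid)"
proof (rule comm_groupI)
  fix x :: 'a
  show "\<exists>y\<in>carrier additive_group. y \<otimes>\<^bsub>additive_group\<^esub> x = \<one>\<^bsub>additive_group\<^esub>"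
    by (rule bexI[of _ "- x"]) simp_all
qed (auto simp: ac_simps)

interpretation additive_group: comm_group "additive_group :: 'a::ab_group_add monoid"
  by (rule comm_group_additive_group)

lemma inv_additive_group: "inv\<^bsub>additive_group\<^esub> x = - x"
  by (rule additive_group.inv_equality) simp_all

lemma subgroup_additive_groupI:
  assumes "0 \<in> H" and "\<And>x y. x \<in> H \<Longrightarrow> y \<in> H \<Longrightarrow> x + y \<in> H" and "\<And>x. x \<in> H \<Longrightarrow> - x \<in> H"
  shows "subgroup H additive_group"
  using assms by (intro additive_group.subgroupI) (auto simp: inv_additive_group)

lemma r_coset_additive_group: "H #>\<^bsub>additive_group\<^esub> p = (\<lambda>h. p + h) ` H"
  by (auto simp: r_coset_def add.commute)

lemma r_coset_additive_group_eq:
  assumes "subgroup H additive_group" and "p - q \<in> H"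
  shows "H #>\<^bsub>additive_group\<^esub> p = H #>\<^bsub>additive_group\<^esub> q"
proof -
  have "p \<in> H #>\<^bsub>additive_group\<^esub> q"
    using assms(2) unfolding r_coset_additive_group by (rule rev_image_eqI) simp
  then show ?thesis
    using additive_group.repr_independence[OF _ _ assms(1)] by (metis UNIV_I additive_group_simps(1))
qed

lemma sum_mem_additive_subgroup:
  assumes "subgroup H additive_group" and "\<And>x. x \<in> A \<Longrightarrow> f x \<in> H"
  shows "sum f A \<in> H"
  using assms(2)
proof (induction A rule: infinite_finite_induct)
  case (insert x A)
  then show ?case
    using subgroup.m_closed[OF assms(1)] by simp
qed (use subgroup.one_closed[OF assms(1)] in simp_all)

lemma Pn_iff: "p \<in> Pn n \<longleftrightarrow> (\<forall>a\<in>Poly_Mapping.keys p. Poly_Mapping.keys a \<subseteq> {1..n})"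
  by (simp add: Pn_def)

lemma Pn_zero: "0 \<in> Pn n"
  by (simp add: Pn_iff)

lemma Pn_one: "1 \<in> Pn n"
  by (simp add: Pn_iff)

lemma Pn_add: "p \<in> Pn n \<Longrightarrow> q \<in> Pn n \<Longrightarrow> p + q \<in> Pn n"
  using keys_add[of p q] by (auto simp: Pn_iff)

lemma Pn_uminus: "p \<in> Pn n \<Longrightarrow> - p \<in> Pn n"
  by (simp add: Pn_iff)

lemma subgroup_Pn: "subgroup (Pn n) additive_group"
  by (rule subgroup_additive_groupI) (simp_all add: Pn_zero Pn_add Pn_uminus)

lemma Pn_mult:
  assumes "p \<in> Pn n" and "q \<in> Pn n"
  shows "p * q \<in> Pn n"
  unfolding Pn_iff
proof
  fix x assume "x \<in> Poly_Mapping.keys (p * q)"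
  then obtain a b where "x = a + b" and "a \<in> Poly_Mapping.keys p" and "b \<in> Poly_Mapping.keys q"
    using keys_mult[of p q] by blast
  moreover have "Poly_Mapping.keys a \<subseteq> {1..n}" and "Poly_Mapping.keys b \<subseteq> {1..n}"
    using assms \<open>a \<in> Poly_Mapping.keys p\<close> \<open>b \<in> Poly_Mapping.keys q\<close> by (auto simp: Pn_iff)
  ultimately show "Poly_Mapping.keys x \<subseteq> {1..n}"
    using keys_add[of a b] by blast
qed

lemma monom_in_Pn: "Poly_Mapping.keys a \<subseteq> {1..n} \<Longrightarrow> monom a \<in> Pn n"
  by (simp add: Pn_iff monom_def)

definition gen_ideal :: "nat \<Rightarrow> 'e set \<Rightarrow> ('e \<Rightarrow> mpoly) \<Rightarrow> mpoly set" where
  "gen_ideal n S g = {\<Sum>e\<in>S. c e * g e | c. \<forall>e. c e \<in> Pn n}"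

lemma edge_ideal_eq_gen_ideal: "edge_ideal n Q = gen_ideal n Q (\<lambda>e. \<Prod>i\<in>e. Xv i)"
  unfolding edge_ideal_def gen_ideal_def ..

lemma deg_ideal_eq_gen_ideal: "deg_ideal n m = gen_ideal n (monos_deg n m) monom"
  unfolding deg_ideal_def gen_ideal_def ..

lemma gen_ideal_memI:
  assumes "\<forall>e. c e \<in> Pn n" shows "(\<Sum>e\<in>S. c e * g e) \<in> gen_ideal n S g"
  using assms unfolding gen_ideal_def by blast

lemma subgroup_gen_ideal: "subgroup (gen_ideal n S g) additive_group"
proof (rule subgroup_additive_groupI)
  show "0 \<in> gen_ideal n S g"
    unfolding gen_ideal_def using Pn_zero by (auto intro!: exI[of _ "\<lambda>_. 0"])
next
  fix x y assume "x \<in> gen_ideal n S g" "y \<in> gen_ideal n S g"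
  then obtain c d where x: "x = (\<Sum>e\<in>S. c e * g e)" and y: "y = (\<Sum>e\<in>S. d e * g e)"
    and "\<forall>e. c e \<in> Pn n" "\<forall>e. d e \<in> Pn n"
    unfolding gen_ideal_def by blast
  then have "\<forall>e. c e + d e \<in> Pn n" by (simp add: Pn_add)
  moreover have "x + y = (\<Sum>e\<in>S. (c e + d e) * g e)"
    unfolding x y by (simp add: sum.distrib distrib_right)
  ultimately show "x + y \<in> gen_ideal n S g"
    using gen_ideal_memI[of "\<lambda>e. c e + d e"] by simp
next
  fix x assume "x \<in> gen_ideal n S g"
  then obtain c where x: "x = (\<Sum>e\<in>S. c e * g e)" and "\<forall>e. c e \<in> Pn n"
    unfolding gen_ideal_def by blast
  then have "\<forall>e. - c e \<in> Pn n" by (simp add: Pn_uminus)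
  moreover have "- x = (\<Sum>e\<in>S. (- c e) * g e)"
    unfolding x by (simp add: sum_negf)
  ultimately show "- x \<in> gen_ideal n S g"
    using gen_ideal_memI[of "\<lambda>e. - c e"] by simp
qed

lemma subgroup_deg_ideal: "subgroup (deg_ideal n m) additive_group"
  unfolding deg_ideal_eq_gen_ideal by (rule subgroup_gen_ideal)

lemma gen_ideal_subset_Pn:
  assumes "\<And>e. e \<in> S \<Longrightarrow> g e \<in> Pn n"
  shows "gen_ideal n S g \<subseteq> Pn n"
proof
  fix x assume "x \<in> gen_ideal n S g"
  then obtain c where x: "x = (\<Sum>e\<in>S. c e * g e)" and c: "\<forall>e. c e \<in> Pn n"
    unfolding gen_ideal_def by blast
  show "x \<in> Pn n"
    unfolding x using subgroup_Pn by (rule sum_mem_additive_subgroup) (simp add: assms c Pn_mult)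
qed

lemma mult_gen_in_gen_ideal:
  assumes "finite S" and "e \<in> S" and "x \<in> Pn n"
  shows "x * g e \<in> gen_ideal n S g"
proof -
  let ?c = "\<lambda>e'. if e' = e then x else 0"
  have "(\<Sum>e'\<in>S. ?c e' * g e') = (\<Sum>e'\<in>S. if e' = e then x * g e' else 0)"
    by (rule sum.cong) auto
  also have "\<dots> = x * g e"
    using assms(1,2) by simp
  finally have "x * g e = (\<Sum>e'\<in>S. ?c e' * g e')" ..
  moreover have "\<forall>e'. ?c e' \<in> Pn n"
    using assms(3) Pn_zero by simp
  ultimately show ?thesis
    using gen_ideal_memI[of ?c] by simp
qed

lemma gen_in_gen_ideal: "finite S \<Longrightarrow> e \<in> S \<Longrightarrow> g e \<in> gen_ideal n S g"
  using mult_gen_in_gen_ideal[OF _ _ Pn_one] by fastforce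

lemma keys_gen_ideal_subset:
  assumes up: "\<And>a b. a \<in> U \<Longrightarrow> b + a \<in> U"
    and gens: "\<And>e. e \<in> S \<Longrightarrow> Poly_Mapping.keys (g e) \<subseteq> U"
    and x: "x \<in> gen_ideal n S g"
  shows "Poly_Mapping.keys x \<subseteq> U"
proof -
  obtain c where x: "x = (\<Sum>e\<in>S. c e * g e)"
    using x unfolding gen_ideal_def by blast
  have "Poly_Mapping.keys (c e * g e) \<subseteq> U" if "e \<in> S" for e
  proof
    fix y assume "y \<in> Poly_Mapping.keys (c e * g e)"
    then obtain a b where "y = a + b" and "b \<in> Poly_Mapping.keys (g e)"
      using keys_mult[of "c e" "g e"] by blast
    then show "y \<in> U" using gens[OF that] up by blast
  qed
  moreover have "Poly_Mapping.keys x \<subseteq> (\<Union>e\<in>S. Poly_Mapping.keys (c e * g e))"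
    unfolding x by (rule keys_sum)
  ultimately show ?thesis by blast
qed

definition tdeg :: "nat \<Rightarrow> (nat \<Rightarrow>\<^sub>0 nat) \<Rightarrow> nat" where
  "tdeg n a = (\<Sum>k\<in>{1..n}. Poly_Mapping.lookup a k)"

lemma tdeg_add: "tdeg n (a + b) = tdeg n a + tdeg n b"
  by (simp add: tdeg_def lookup_add sum.distrib)

lemma tdeg_single: "tdeg n (Poly_Mapping.single k c) = (if k \<in> {1..n} then c else 0)"
  by (simp add: tdeg_def lookup_single when_def)

lemma keys_add_nat: "Poly_Mapping.keys (a + b) = Poly_Mapping.keys a \<union> Poly_Mapping.keys (b :: 'x \<Rightarrow>\<^sub>0 nat)"
  by (auto simp: in_keys_iff lookup_add)

lemma finite_monomials_tdeg_le: "finite {a. Poly_Mapping.keys a \<subseteq> {1..n} \<and> tdeg n a \<le> m}"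
  (is "finite ?B")
proof -
  have "Poly_Mapping.lookup a k \<le> m" if "a \<in> ?B" "k \<in> {1..n}" for a k
    using that member_le_sum[of k "{1..n}" "Poly_Mapping.lookup a"] by (simp add: tdeg_def)
  then have "Poly_Mapping.lookup ` ?B
      \<subseteq> {f. \<forall>x. (x \<in> {1..n} \<longrightarrow> f x \<in> {0..m}) \<and> (x \<notin> {1..n} \<longrightarrow> f x = 0)}"
    by (auto simp: in_keys_iff subset_iff)
  moreover have "finite {f. \<forall>x. (x \<in> {1..n} \<longrightarrow> f x \<in> {0..m}) \<and> (x \<notin> {1..n} \<longrightarrow> f x = (0::nat))}"
    by (rule finite_set_of_finite_funs) auto
  ultimately have "finite (Poly_Mapping.lookup ` ?B)"
    by (rule finite_subset)
  then show ?thesis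
    by (rule finite_imageD) (simp add: inj_on_def)
qed

lemma finite_monos_deg: "finite (monos_deg n m)"
  by (rule finite_subset[OF _ finite_monomials_tdeg_le[of n m]]) (auto simp: monos_deg_def tdeg_def)

lemma monomial_divisor_of_tdeg:
  assumes "k \<le> tdeg n a"
  obtains b c where "a = b + c" and "tdeg n c = k"
proof -
  have "\<exists>b c. a = b + c \<and> tdeg n c = k"
    using assms
  proof (induction k)
    case 0
    show ?case by (rule exI[of _ a], rule exI[of _ 0]) (simp add: tdeg_def)
  next
    case (Suc k)
    then obtain b c where a: "a = b + c" and c: "tdeg n c = k"
      by auto
    then have "0 < tdeg n b"
      using Suc.prems by (simp add: tdeg_add)
    moreover have "tdeg n b = 0" if "\<forall>i\<in>{1..n}. Poly_Mapping.lookup b i = 0"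
      using that by (simp add: tdeg_def)
    ultimately obtain i where i: "i \<in> {1..n}" and "0 < Poly_Mapping.lookup b i"
      by (metis neq0_conv)
    then have "b = (b - Poly_Mapping.single i 1) + Poly_Mapping.single i 1"
      by (intro poly_mapping_eqI) (auto simp: lookup_add lookup_minus lookup_single when_def)
    then have "a = (b - Poly_Mapping.single i 1) + (Poly_Mapping.single i 1 + c)"
      using a by (metis add.assoc)
    moreover have "tdeg n (Poly_Mapping.single i 1 + c) = Suc k"
      using c i by (simp add: tdeg_add tdeg_single)
    ultimately show ?case by blast
  qed
  then show ?thesis using that by blast
qed

lemma monom_in_deg_ideal:
  assumes a: "Poly_Mapping.keys a \<subseteq> {1..n}" and "m \<le> tdeg n a"
  shows "monom a \<in> deg_ideal n m"
proof -
  obtain b c where abc: "a = b + c" and "tdeg n c = m"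
    using monomial_divisor_of_tdeg[OF \<open>m \<le> tdeg n a\<close>] .
  then have "c \<in> monos_deg n m" and "monom b \<in> Pn n"
    using a by (auto simp: monos_deg_def tdeg_def keys_add_nat intro!: monom_in_Pn)
  moreover have "monom a = monom b * monom c"
    by (simp add: abc monom_def mult_single)
  ultimately show ?thesis
    unfolding deg_ideal_eq_gen_ideal by (simp add: mult_gen_in_gen_ideal finite_monos_deg)
qed

lemma sum_monom_keys: "(\<Sum>a\<in>Poly_Mapping.keys p. monom a) = (p :: mpoly)"
proof (rule poly_mapping_eqI)
  fix k
  have "Poly_Mapping.lookup (\<Sum>a\<in>Poly_Mapping.keys p. monom a) k
      = (\<Sum>a\<in>Poly_Mapping.keys p. if a = k then 1 else 0)"
    unfolding lookup_sum monom_def by (intro sum.cong) (auto simp: lookup_single when_def)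
  also have "\<dots> = Poly_Mapping.lookup p k"
    by (auto simp: in_keys_iff)
  finally show "Poly_Mapping.lookup (\<Sum>a\<in>Poly_Mapping.keys p. monom a) k = Poly_Mapping.lookup p k" .
qed

lemma pi_img_eq: "pi_img n m I = (\<lambda>p. deg_ideal n m #>\<^bsub>additive_group\<^esub> p) ` I"
  by (simp add: pi_img_def pi_m_def r_coset_additive_group)

lemma finite_pi_img_Pn: "finite (pi_img n m (Pn n))"
proof -
  let ?J = "deg_ideal n m"
  define L where "L = {a. Poly_Mapping.keys a \<subseteq> {1..n} \<and> tdeg n a \<le> m}"
  have "?J #>\<^bsub>additive_group\<^esub> p \<in> (\<lambda>A. ?J #>\<^bsub>additive_group\<^esub> (\<Sum>a\<in>A. monom a)) ` Pow L"
    if p: "p \<in> Pn n" for p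
  proof -
    let ?K = "Poly_Mapping.keys p"
    have high: "(\<Sum>a\<in>?K - L. monom a) \<in> ?J"
    proof (rule sum_mem_additive_subgroup[OF subgroup_deg_ideal])
      fix a assume "a \<in> ?K - L"
      then show "monom a \<in> ?J"
        using p by (intro monom_in_deg_ideal) (auto simp: L_def Pn_iff)
    qed
    have "p = (\<Sum>a\<in>?K \<inter> L. monom a) + (\<Sum>a\<in>?K - L. monom a)"
      using sum.Int_Diff[OF finite_keys, of monom p L] sum_monom_keys[of p] by simp
    then have "p - (\<Sum>a\<in>?K \<inter> L. monom a) = (\<Sum>a\<in>?K - L. monom a)"
      by (metis add_diff_cancel_left')
    then have "?J #>\<^bsub>additive_group\<^esub> p = ?J #>\<^bsub>additive_group\<^esub> (\<Sum>a\<in>?K \<inter> L. monom a)"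
      using high by (intro r_coset_additive_group_eq[OF subgroup_deg_ideal]) simp
    then show ?thesis by blast
  qed
  then have "pi_img n m (Pn n) \<subseteq> (\<lambda>A. ?J #>\<^bsub>additive_group\<^esub> (\<Sum>a\<in>A. monom a)) ` Pow L"
    unfolding pi_img_eq by blast
  moreover have "finite L"
    unfolding L_def by (rule finite_monomials_tdeg_le)
  ultimately show ?thesis
    by (simp add: finite_subset)
qed

lemma finite_contact_structure: "Q \<in> contact_structures n \<Longrightarrow> finite Q"
  by (rule finite_subset[of _ "Pow {1..n}"]) (auto simp: contact_structures_def)

lemma contact_structure_edgeE:
  assumes "Q \<in> contact_structures n" and "e \<in> Q"
  obtains i j where "e = {i, j}" and "i \<noteq> j" and "i \<in> {1..n}" and "j \<in> {1..n}"
  using assms unfolding contact_structures_def by blast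

lemma Xv_mult_Xv: "Xv i * Xv j = monom (Poly_Mapping.single i 1 + Poly_Mapping.single j 1)"
  by (simp add: Xv_def monom_def mult_single)

lemma edge_ideal_subset_Pn:
  assumes "Q \<in> contact_structures n"
  shows "edge_ideal n Q \<subseteq> Pn n"
  unfolding edge_ideal_eq_gen_ideal
proof (rule gen_ideal_subset_Pn)
  fix e assume "e \<in> Q"
  with assms obtain i j where "e = {i, j}" "i \<noteq> j" "i \<in> {1..n}" "j \<in> {1..n}"
    by (rule contact_structure_edgeE)
  then show "(\<Prod>k\<in>e. Xv k) \<in> Pn n"
    using monom_in_Pn[of "Poly_Mapping.single i 1 + Poly_Mapping.single j 1" n]
    by (simp add: Xv_mult_Xv keys_add_nat)
qed

definition edge_or_high_monomials :: "nat \<Rightarrow> nat \<Rightarrow> nat set set \<Rightarrow> (nat \<Rightarrow>\<^sub>0 nat) set" where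
  "edge_or_high_monomials n m Q =
     {a. (\<exists>e\<in>Q. \<forall>k\<in>e. 0 < Poly_Mapping.lookup a k) \<or> m \<le> tdeg n a}"

lemma edge_or_high_monomials_upward:
  assumes "a \<in> edge_or_high_monomials n m Q"
  shows "b + a \<in> edge_or_high_monomials n m Q"
  using assms unfolding edge_or_high_monomials_def
  by (force simp: lookup_add tdeg_add)

lemma keys_edge_ideal:
  assumes "Q \<in> contact_structures n" and "p \<in> edge_ideal n Q"
  shows "Poly_Mapping.keys p \<subseteq> edge_or_high_monomials n m Q"
proof (rule keys_gen_ideal_subset[OF edge_or_high_monomials_upward _ assms(2)[unfolded edge_ideal_eq_gen_ideal]])
  fix e assume "e \<in> Q"
  with assms(1) obtain i j where e: "e = {i, j}" and "i \<noteq> j"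
    by (rule contact_structure_edgeE)
  let ?a = "Poly_Mapping.single i 1 + Poly_Mapping.single j (1::nat)"
  have "\<forall>k\<in>e. 0 < Poly_Mapping.lookup ?a k"
    by (simp add: e lookup_add)
  with \<open>e \<in> Q\<close> have "?a \<in> edge_or_high_monomials n m Q"
    unfolding edge_or_high_monomials_def by blast
  then show "Poly_Mapping.keys (\<Prod>k\<in>e. Xv k) \<subseteq> edge_or_high_monomials n m Q"
    using \<open>i \<noteq> j\<close> by (simp add: e Xv_mult_Xv monom_def)
qed

lemma keys_deg_ideal:
  assumes "p \<in> deg_ideal n m"
  shows "Poly_Mapping.keys p \<subseteq> edge_or_high_monomials n m Q"
proof (rule keys_gen_ideal_subset[OF edge_or_high_monomials_upward _ assms[unfolded deg_ideal_eq_gen_ideal]])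
  fix b assume "b \<in> monos_deg n m"
  then show "Poly_Mapping.keys (monom b) \<subseteq> edge_or_high_monomials n m Q"
    by (simp add: monom_def monos_deg_def edge_or_high_monomials_def tdeg_def)
qed

lemma edge_monomial_notin_edge_or_high_monomials:
  assumes "Q \<in> contact_structures n" and "i \<noteq> j" and "{i, j} \<notin> Q" and "3 \<le> m"
  shows "Poly_Mapping.single i 1 + Poly_Mapping.single j 1 \<notin> edge_or_high_monomials n m Q"
proof
  let ?a = "Poly_Mapping.single i 1 + Poly_Mapping.single j (1::nat)"
  assume "?a \<in> edge_or_high_monomials n m Q"
  moreover have "tdeg n ?a \<le> 2"
    by (simp add: tdeg_add tdeg_single)
  ultimately obtain e where "e \<in> Q" and pos: "\<forall>k\<in>e. 0 < Poly_Mapping.lookup ?a k"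
    using \<open>3 \<le> m\<close> by (auto simp: edge_or_high_monomials_def)
  moreover obtain i' j' where e: "e = {i', j'}" and "i' \<noteq> j'"
    using contact_structure_edgeE[OF assms(1) \<open>e \<in> Q\<close>] by blast
  moreover have "k \<in> {i, j}" if "0 < Poly_Mapping.lookup ?a k" for k
    using that by (auto simp: lookup_add lookup_single when_def split: if_splits)
  ultimately have "e = {i, j}" by auto
  then show False using \<open>e \<in> Q\<close> \<open>{i, j} \<notin> Q\<close> by simp
qed

lemma pi_img_edge_ideal_subsetD:
  assumes Q1: "Q1 \<in> contact_structures n" and Q2: "Q2 \<in> contact_structures n" and "3 \<le> m"
    and sub: "pi_img n m (edge_ideal n Q1) \<subseteq> pi_img n m (edge_ideal n Q2)"
  shows "Q1 \<subseteq> Q2"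
proof
  fix e assume "e \<in> Q1"
  with Q1 obtain i j where e: "e = {i, j}" and "i \<noteq> j"
    by (rule contact_structure_edgeE)
  let ?J = "deg_ideal n m" and ?a = "Poly_Mapping.single i 1 + Poly_Mapping.single j (1::nat)"
  have "(\<Prod>k\<in>e. Xv k) \<in> edge_ideal n Q1"
    unfolding edge_ideal_eq_gen_ideal using finite_contact_structure[OF Q1] \<open>e \<in> Q1\<close>
    by (rule gen_in_gen_ideal)
  then have "monom ?a \<in> edge_ideal n Q1"
    using \<open>i \<noteq> j\<close> by (simp add: e Xv_mult_Xv)
  then obtain q where q: "q \<in> edge_ideal n Q2"
    and eq: "?J #>\<^bsub>additive_group\<^esub> monom ?a = ?J #>\<^bsub>additive_group\<^esub> q"
    using sub unfolding pi_img_eq by blast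
  have "monom ?a \<in> ?J #>\<^bsub>additive_group\<^esub> monom ?a"
    by (rule additive_group.rcos_self) (simp_all add: subgroup_deg_ideal)
  then have "monom ?a \<in> (\<lambda>h. q + h) ` ?J"
    unfolding eq by (simp add: r_coset_additive_group)
  then obtain h where "h \<in> ?J" and "monom ?a = q + h"
    by blast
  then have "Poly_Mapping.keys (monom ?a) \<subseteq> edge_or_high_monomials n m Q2"
    using keys_add[of q h] keys_edge_ideal[OF Q2 q, of m] keys_deg_ideal[OF \<open>h \<in> ?J\<close>, of Q2]
    by auto
  then have "?a \<in> edge_or_high_monomials n m Q2"
    by (simp add: monom_def)
  then show "e \<in> Q2"
    using edge_monomial_notin_edge_or_high_monomials[OF Q2 \<open>i \<noteq> j\<close> _ \<open>3 \<le> m\<close>] e by blast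
qed

lemma subgroup_pi_img:
  assumes "subgroup I additive_group"
  shows "subgroup (pi_img n m I) (additive_group Mod deg_ideal n m)"
proof -
  have "deg_ideal n m \<lhd> additive_group"
    using subgroup_deg_ideal by (simp add: additive_group.normal_iff_subgroup)
  then interpret group_hom additive_group "additive_group Mod deg_ideal n m"
      "\<lambda>p. deg_ideal n m #>\<^bsub>additive_group\<^esub> p"
    by (simp add: group_hom_def group_hom_axioms_def normal.factorgroup_is_group
        normal.r_coset_hom_Mod)
  show ?thesis
    unfolding pi_img_eq by (rule subgroup_img_is_subgroup[OF assms])
qed

lemma finite_pi_img_edge_ideal:
  "Q \<in> contact_structures n \<Longrightarrow> finite (pi_img n m (edge_ideal n Q))"
  using finite_pi_img_Pn edge_ideal_subset_Pn unfolding pi_img_def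
  by (metis finite_subset image_mono)

lemma radd_eq_set_mult: "radd A B = A <#>\<^bsub>additive_group\<^esub> B"
  by (auto simp: radd_def set_mult_def)

lemma radd_commute: "radd A B = radd B A"
  unfolding radd_def by (auto intro: add.commute)

lemma quot_group_subgroup_sum_eq_rcosets:
  fixes J :: "mpoly set"
  defines "F \<equiv> additive_group Mod J"
  shows "quot_group (subgroup_sum A B) H = rcosets\<^bsub>F\<lparr>carrier := A <#>\<^bsub>F\<^esub> B\<rparr>\<^esub> H"
proof -
  have mult: "x \<otimes>\<^bsub>F\<^esub> y = radd x y" for x y
    by (simp add: F_def FactGroup_def radd_eq_set_mult)
  have "(\<lambda>h. radd g h) ` H = H #>\<^bsub>F\<lparr>carrier := K\<rparr>\<^esub> g" for g K
    by (auto simp: r_coset_def mult radd_commute[of g])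
  moreover have "subgroup_sum A B = A <#>\<^bsub>F\<^esub> B"
    by (auto simp: subgroup_sum_def set_mult_def mult)
  ultimately show ?thesis
    unfolding quot_group_def RCOSETS_def by auto
qed

theorem mainTheorem3:
  fixes n m :: nat
  assumes "n \<ge> 3" and "m \<ge> 3"
  shows "(\<forall>Q1\<in>contact_structures n. \<forall>Q2\<in>contact_structures n.
            finite (dquot n m Q1 Q2))
       \<and> (\<forall>Q1\<in>contact_structures n. \<forall>Q2\<in>contact_structures n.
            dprime n m Q1 Q2 = 0 \<longleftrightarrow> Q1 = Q2)
       \<and> (\<forall>Q1\<in>contact_structures n. \<forall>Q2\<in>contact_structures n.
            dprime n m Q1 Q2 = dprime n m Q2 Q1)
       \<and> (\<forall>Q1\<in>contact_structures n. \<forall>Q2\<in>contact_structures n. \<forall>Q3\<in>contact_structures n.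
            dprime n m Q1 Q3 \<le> dprime n m Q1 Q2 + dprime n m Q2 Q3)"
proof -
  define F where "F = (additive_group :: mpoly monoid) Mod deg_ideal n m"
  define A where "A Q = pi_img n m (edge_ideal n Q)" for Q
  interpret F: comm_group F
    unfolding F_def by (rule additive_group.abelian_FactGroup[OF subgroup_deg_ideal])
  have sub: "subgroup (A Q) F" for Q
    unfolding A_def F_def edge_ideal_eq_gen_ideal by (rule subgroup_pi_img[OF subgroup_gen_ideal])
  have fin: "finite (A Q)" if "Q \<in> contact_structures n" for Q
    unfolding A_def using that by (rule finite_pi_img_edge_ideal)
  have dquot: "dquot n m Q1 Q2 = rcosets\<^bsub>F\<lparr>carrier := A Q1 <#>\<^bsub>F\<^esub> A Q2\<rparr>\<^esub> (A Q1 \<inter> A Q2)" for Q1 Q2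
    unfolding dquot_def A_def F_def by (rule quot_group_subgroup_sum_eq_rcosets)
  have dprime: "dprime n m Q1 Q2 = log 2 (join_meet_index F (A Q1) (A Q2))" for Q1 Q2
    by (simp add: dprime_def dquot join_meet_index_def)
  have inj: "A Q1 = A Q2 \<longleftrightarrow> Q1 = Q2"
    if "Q1 \<in> contact_structures n" "Q2 \<in> contact_structures n" for Q1 Q2
    using pi_img_edge_ideal_subsetD[OF that \<open>m \<ge> 3\<close>] pi_img_edge_ideal_subsetD[OF that(2,1) \<open>m \<ge> 3\<close>]
    unfolding A_def by blast
  show ?thesis
    using F.finite_join_meet_rcosets F.log_join_meet_index_eq_0_iff F.join_meet_index_commute
      F.log_join_meet_index_triangle sub fin inj
    by (simp add: dquot dprime)
qed

end
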